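(* Let $p>1$, $\alpha\in\mathbb{R}$, $K_1>0$. There exists $C(K_1)>0$ such that for all $|z|\le K_1$ and all $s\ge1$, $$\left|h(s)|z|^{p-1}z\frac{\ln^\alpha(\psi_1^2(s)z^2+2)}{\ln^\alpha(\psi_1^2(s)+2)}-\frac{|z|^{p-1}z}{p-1}\right|\le\frac{C(K_1)}{s}.$$
   Context: For $\tau>0$ let $\Psi(\tau)>0$ be the unique number with $\int_{\Psi(\tau)}^\infty\frac{dx}{x^p\ln^\alpha(x^2+2)}=\tau$ (equivalently, for $T>0$, $\psi(t)=\Psi(T-t)$ is the positive solution of $\psi'=\psi^p\ln^\alpha(\psi^2+2)$ with $\psi\to+\infty$ as $t\to T$); $\psi_1(s)=\Psi(e^{-s})$ and $h(s)=e^{-s}\psi_1^{p-1}(s)\ln^\alpha(\psi_1^2(s)+2)$. *)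

theory Defs
  imports "HOL-Analysis.Analysis"
begin

text \<open>Psi p a tau: the unique y > 0 with integral from y to infinity of
  1 / (x^p (ln(x^2+2))^a) dx equal to tau (improper integral as the
  Henstock-Kurzweil integral over the unbounded interval {y..}).\<close>
definition Psi :: "real \<Rightarrow> real \<Rightarrow> real \<Rightarrow> real" where
  "Psi p a tau = (THE y. y > 0 \<and>
     ((\<lambda>x. 1 / (x powr p * (ln (x\<^sup>2 + 2)) powr a)) has_integral tau) {y..})"

definition psi1 :: "real \<Rightarrow> real \<Rightarrow> real \<Rightarrow> real" where
  "psi1 p a s = Psi p a (exp (- s))"

definition hfun :: "real \<Rightarrow> real \<Rightarrow> real \<Rightarrow> real" where
  "hfun p a s = exp (- s) * (psi1 p a s) powr (p - 1) * (ln ((psi1 p a s)\<^sup>2 + 2)) powr a"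

end

theory Submission imports Defs "HOL-Real_Asymp.Real_Asymp" begin

text \<open>Write L(x) = ln (x^2 + 2) and G(y) for the integral of f(x) = 1 / (x^p L(x)^a) over
  [y, \<infinity>), so that y = \<psi>1(s) solves G(y) = exp (-s) and h(s) = G(y) y^(p-1) L(y)^a.
  The explicit function \<Phi>(y) = y^(1-p) L(y)^(-a) / (p-1) satisfies -\<Phi>' = f (1 + \<epsilon>) with
  \<epsilon> = O(1/L); integrating gives G = \<Phi> (1 + O(1/L)), hence h = 1/(p-1) + O(1/L(y)), and
  s = -ln G(y) = O(L(y)), so that 1/L(y) = O(1/s).
  For |z| \<ge> exp (-L(y)/4) the ratio ln (y^2 z^2 + 2) / L(y) is 1 + O((1 + |ln |z||) / L(y)) and
  |z|^p |ln |z|| is bounded; for smaller |z| the ratio is at most polynomial in L(y), which the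
  factor |z|^p \<le> exp (-p L(y)/4) absorbs.\<close>

lemma sq_plus_two_pos: "0 < (x::real)\<^sup>2 + 2"
  using zero_le_power2[of x] by linarith

lemma ln_sq_plus_two_ge_ln2: "ln 2 \<le> ln ((x::real)\<^sup>2 + 2)"
  by (subst ln_le_cancel_iff) (auto simp: sq_plus_two_pos)

lemma ln_sq_plus_two_pos: "0 < ln ((x::real)\<^sup>2 + 2)"
  using ln_sq_plus_two_ge_ln2[of x] ln_gt_zero[of "2::real"] by linarith

lemma ln_sq_plus_two_mono: "0 \<le> y \<Longrightarrow> y \<le> x \<Longrightarrow> ln (y\<^sup>2 + 2) \<le> ln ((x::real)\<^sup>2 + 2)"
  by (subst ln_le_cancel_iff) (auto simp: sq_plus_two_pos power_mono)

lemma powr_le_max_endpoints: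
  "0 < lo \<Longrightarrow> lo \<le> x \<Longrightarrow> x \<le> hi \<Longrightarrow> (x::real) powr e \<le> max (lo powr e) (hi powr e)"
  using powr_mono2[of e x hi] powr_mono2'[of e lo x] by (cases "e \<ge> 0") auto

lemma abs_powr_minus_one_le:
  fixes lo hi r a :: real
  assumes "0 < lo" "lo \<le> 1" "1 \<le> hi" "lo \<le> r" "r \<le> hi"
  shows "\<bar>r powr a - 1\<bar> \<le> \<bar>a\<bar> * (lo powr (a - 1) + hi powr (a - 1)) * \<bar>r - 1\<bar>"
proof -
  have deriv: "DERIV (\<lambda>x. x powr a) x :> a * x powr (a - 1)" if "lo \<le> x" for x
    using has_real_derivative_powr[of x a] that assms by auto
  have slope: "\<bar>a * \<xi> powr (a - 1)\<bar> \<le> \<bar>a\<bar> * (lo powr (a - 1) + hi powr (a - 1))"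
    if "lo \<le> \<xi>" "\<xi> \<le> hi" for \<xi>
  proof -
    have "\<xi> powr (a - 1) \<le> lo powr (a - 1) + hi powr (a - 1)"
    proof -
      have "0 \<le> lo powr (a - 1)" "0 \<le> hi powr (a - 1)" by simp_all
      then have "max (lo powr (a - 1)) (hi powr (a - 1)) \<le> lo powr (a - 1) + hi powr (a - 1)"
        by linarith
      then show ?thesis using powr_le_max_endpoints[of lo \<xi> hi "a - 1"] that assms by linarith
    qed
    then show ?thesis by (simp add: abs_mult mult_left_mono)
  qed
  consider "r = 1" | "r < 1" | "r > 1" by linarith
  then show ?thesis
  proof cases
    case 2
    obtain \<xi> where \<xi>: "r < \<xi>" "\<xi> < 1" "1 powr a - r powr a = (1 - r) * (a * \<xi> powr (a - 1))"
      using MVT2[OF 2, of "\<lambda>x. x powr a" "\<lambda>x. a * x powr (a - 1)"] deriv assms by auto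
    have "\<bar>r powr a - 1\<bar> = \<bar>r - 1\<bar> * \<bar>a * \<xi> powr (a - 1)\<bar>"
      using \<xi>(3) by (simp add: abs_mult abs_minus_commute)
    also have "\<dots> \<le> \<bar>r - 1\<bar> * (\<bar>a\<bar> * (lo powr (a - 1) + hi powr (a - 1)))"
      using \<xi> assms by (intro mult_left_mono slope) auto
    finally show ?thesis by (simp add: mult.commute)
  next
    case 3
    obtain \<xi> where \<xi>: "1 < \<xi>" "\<xi> < r" "r powr a - 1 powr a = (r - 1) * (a * \<xi> powr (a - 1))"
      using MVT2[OF 3, of "\<lambda>x. x powr a" "\<lambda>x. a * x powr (a - 1)"] deriv assms by auto
    have "\<bar>r powr a - 1\<bar> = \<bar>r - 1\<bar> * \<bar>a * \<xi> powr (a - 1)\<bar>"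
      using \<xi>(3) by (simp add: abs_mult)
    also have "\<dots> \<le> \<bar>r - 1\<bar> * (\<bar>a\<bar> * (lo powr (a - 1) + hi powr (a - 1)))"
      using \<xi> assms by (intro mult_left_mono slope) auto
    finally show ?thesis by (simp add: mult.commute)
  qed simp
qed

lemma powr_mult_neg_ln_le:
  fixes w p :: real
  assumes "0 < w" "p > 0"
  shows "w powr p * (- ln w) \<le> 1 / p"
proof -
  have "- p * ln w = ln (w powr (- p))" using assms by simp
  also have "\<dots> \<le> w powr (- p) - 1" using assms by (intro ln_le_minus_one) auto
  finally have "w powr p * (- p * ln w) \<le> w powr p * w powr (- p)"
    using assms by (intro mult_left_mono) auto
  also have "w powr p * w powr (- p) = 1" using assms by (simp add: powr_add[symmetric])
  finally have "p * (w powr p * (- ln w)) \<le> 1" by (simp add: algebra_simps)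
  then show ?thesis using assms by (simp add: field_simps mult.commute)
qed

lemma powr_le_exp:
  fixes L b c :: real
  assumes "L > 0" "b > 0" "c > 0"
  shows "L powr b \<le> (b / c) powr b * exp (c * L)"
proof -
  have "ln (L * c / b) \<le> L * c / b - 1" using assms by (intro ln_le_minus_one) auto
  moreover have "ln (L * c / b) = ln L - ln (b / c)" using assms
    by (simp add: ln_divide_pos ln_mult_pos)
  ultimately have "b * ln L \<le> b * (L * c / b + ln (b / c))" using assms by (intro mult_left_mono) auto
  also have "\<dots> = c * L + b * ln (b / c)" using assms by (simp add: field_simps)
  finally have "exp (b * ln L) \<le> exp (c * L + b * ln (b / c))" by simp
  also have "\<dots> = (b / c) powr b * exp (c * L)" using assms by (simp add: exp_add powr_def mult.commute)
  finally show ?thesis using assms by (simp add: powr_def mult.commute)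
qed

lemma powr_le_powr_abs_of_bounds:
  fixes Q r a :: real
  assumes "1 \<le> Q" "1 / Q \<le> r" "r \<le> Q"
  shows "r powr a \<le> Q powr \<bar>a\<bar>"
proof (cases "a \<ge> 0")
  case True
  have "0 < 1 / Q" using assms by simp
  then have "r > 0" using assms by linarith
  then show ?thesis using assms True by (simp add: powr_mono2)
next
  case False
  have "r powr a \<le> (1 / Q) powr a" using powr_mono2'[of a "1 / Q" r] False assms by auto
  also have "\<dots> = Q powr (- a)" using assms by (simp add: powr_divide powr_minus_divide)
  finally show ?thesis using False by simp
qed

lemma ex_le_over_ln_sq_plus_two:
  fixes f :: "real \<Rightarrow> real"
  assumes "X > 0"
    and large: "\<And>y. X \<le> y \<Longrightarrow> P y \<Longrightarrow> f y \<le> c / ln (y\<^sup>2 + 2)"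
    and small: "\<And>y. 0 < y \<Longrightarrow> y \<le> X \<Longrightarrow> P y \<Longrightarrow> f y \<le> M"
  shows "\<exists>B. \<forall>y>0. P y \<longrightarrow> f y \<le> B / ln (y\<^sup>2 + 2)"
proof (intro exI allI impI)
  fix y :: real assume y: "y > 0" "P y"
  let ?B = "max c 0 + max M 0 * ln (X\<^sup>2 + 2)"
  have L: "ln (y\<^sup>2 + 2) > 0" by (rule ln_sq_plus_two_pos)
  show "f y \<le> ?B / ln (y\<^sup>2 + 2)"
  proof (cases "X \<le> y")
    case True
    have "0 \<le> max M 0 * ln (X\<^sup>2 + 2)" "c \<le> max c 0"
      using ln_sq_plus_two_pos[of X] by auto
    then have "c \<le> ?B" by linarith
    then have "c / ln (y\<^sup>2 + 2) \<le> ?B / ln (y\<^sup>2 + 2)"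
      using L by (intro divide_right_mono) auto
    then show ?thesis using large[OF True y(2)] by linarith
  next
    case False
    have "1 \<le> ln (X\<^sup>2 + 2) / ln (y\<^sup>2 + 2)"
      using ln_sq_plus_two_mono[of y X] False y L by simp
    then have "max M 0 * 1 \<le> max M 0 * (ln (X\<^sup>2 + 2) / ln (y\<^sup>2 + 2))"
      by (intro mult_left_mono) auto
    then have "M \<le> max M 0 * (ln (X\<^sup>2 + 2) / ln (y\<^sup>2 + 2))" by linarith
    also have "\<dots> = max M 0 * ln (X\<^sup>2 + 2) / ln (y\<^sup>2 + 2)" by simp
    also have "\<dots> \<le> ?B / ln (y\<^sup>2 + 2)" using L by (intro divide_right_mono) auto
    finally show ?thesis using small[OF y(1) _ y(2)] False by linarith
  qed
qed

lemma le_div_of_le_div_ln: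
  fixes x B L A s :: real
  assumes "x \<le> B / L" "0 < L" "0 < s" "s \<le> A * L"
  shows "x \<le> max B 0 * A / s"
proof -
  have "B / L \<le> max B 0 / L" using assms(2) by (intro divide_right_mono) auto
  also have "\<dots> \<le> max B 0 * A / s"
    using mult_right_mono[OF assms(4), of "max B 0"] assms(2,3) by (simp add: field_simps)
  finally have "B / L \<le> max B 0 * A / s" .
  then show ?thesis using assms(1) by linarith
qed

lemma abs_mult_sub_le_div:
  fixes h c V \<rho> B D M s :: real
  assumes "s \<ge> 1" "B \<ge> 0" "c \<ge> 0"
    and "\<bar>h - c\<bar> \<le> B / s" "\<bar>V\<bar> * \<bar>\<rho> - 1\<bar> \<le> D / s" "\<bar>V\<bar> \<le> M"
  shows "\<bar>h * V * \<rho> - V * c\<bar> \<le> ((c + B) * D + M * B) / s"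
proof -
  have "h * V * \<rho> - V * c = h * (V * (\<rho> - 1)) + V * (h - c)" by (simp add: algebra_simps)
  then have "\<bar>h * V * \<rho> - V * c\<bar> \<le> \<bar>h\<bar> * (\<bar>V\<bar> * \<bar>\<rho> - 1\<bar>) + \<bar>V\<bar> * \<bar>h - c\<bar>"
    by (metis abs_mult abs_triangle_ineq)
  also have "\<dots> \<le> (c + B) * (D / s) + M * (B / s)"
  proof (intro add_mono mult_mono)
    have "B / s \<le> B / 1" using assms(1,2) by (intro divide_left_mono) auto
    then show "\<bar>h\<bar> \<le> c + B" using assms(3,4) by linarith
  qed (use assms in auto)
  also have "\<dots> = ((c + B) * D + M * B) / s" by (simp add: add_divide_distrib)
  finally show ?thesis .
qed

lemma abs_abs_powr_mult_self: "\<bar>\<bar>z\<bar> powr (p - 1) * z\<bar> = \<bar>z::real\<bar> powr p"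
  by (cases "z = 0") (simp_all add: abs_mult powr_diff)

subsection \<open>The logarithmic ratio\<close>

lemma ln_sq_mult_plus_two_le:
  fixes y w K :: real
  assumes "\<bar>w\<bar> \<le> K"
  shows "ln (y\<^sup>2 * w\<^sup>2 + 2) \<le> ln (y\<^sup>2 + 2) + ln (max 1 (K\<^sup>2))"
proof -
  let ?m = "max 1 (K\<^sup>2)"
  have "w\<^sup>2 \<le> ?m" using power_mono[OF assms, of 2] by simp
  then have "y\<^sup>2 * w\<^sup>2 + 2 \<le> ?m * (y\<^sup>2 + 2)"
    using mult_left_mono[of "w\<^sup>2" ?m "y\<^sup>2"] by (simp add: algebra_simps)
  then have "ln (y\<^sup>2 * w\<^sup>2 + 2) \<le> ln (?m * (y\<^sup>2 + 2))"
    using sq_plus_two_pos[of "y * w"] by (simp add: power_mult_distrib)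
  also have "\<dots> = ln (y\<^sup>2 + 2) + ln ?m" using sq_plus_two_pos[of y] by (simp add: ln_mult)
  finally show ?thesis .
qed

lemma ln_sq_mult_plus_two_ge:
  fixes y w :: real
  assumes "0 < w" "w \<le> 1"
  shows "ln (y\<^sup>2 + 2) + 2 * ln w \<le> ln (y\<^sup>2 * w\<^sup>2 + 2)"
proof -
  have "w\<^sup>2 \<le> 1" using assms by (simp add: power_le_one)
  then have "w\<^sup>2 * (y\<^sup>2 + 2) \<le> y\<^sup>2 * w\<^sup>2 + 2"
    using mult_left_mono[of "w\<^sup>2" 1 "y\<^sup>2"] by (simp add: algebra_simps)
  then have "ln (w\<^sup>2 * (y\<^sup>2 + 2)) \<le> ln (y\<^sup>2 * w\<^sup>2 + 2)"
    using assms sq_plus_two_pos[of y] sq_plus_two_pos[of "y * w"]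
    by (subst ln_le_cancel_iff) (auto simp: power_mult_distrib)
  moreover have "ln (w\<^sup>2 * (y\<^sup>2 + 2)) = ln (y\<^sup>2 + 2) + 2 * ln w"
    using assms sq_plus_two_pos[of y] by (simp add: ln_mult_pos ln_realpow)
  ultimately show ?thesis by simp
qed

lemma ln_sq_plus_two_le_mult:
  fixes y w :: real
  assumes "1 \<le> \<bar>w\<bar>"
  shows "ln (y\<^sup>2 + 2) \<le> ln (y\<^sup>2 * w\<^sup>2 + 2)"
proof -
  have "1 \<le> w\<^sup>2" using power_mono[OF assms, of 2] by simp
  then have "y\<^sup>2 * 1 \<le> y\<^sup>2 * w\<^sup>2" by (intro mult_left_mono) auto
  then show ?thesis using sq_plus_two_pos[of y] by (subst ln_le_cancel_iff) auto
qed

lemma log_ratio_error_moderate: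
  fixes p a K :: real
  assumes "p > 0"
  shows "\<exists>B. \<forall>y w. 0 < w \<longrightarrow> w \<le> K \<longrightarrow> exp (- ln (y\<^sup>2 + 2) / 4) \<le> w \<longrightarrow>
           w powr p * \<bar>(ln (y\<^sup>2 * w\<^sup>2 + 2) / ln (y\<^sup>2 + 2)) powr a - 1\<bar> \<le> B / ln (y\<^sup>2 + 2)"
proof (intro exI allI impI)
  define m where "m = max 1 (K\<^sup>2)"
  define R where "R = 1 + ln m / ln 2"
  define D where "D = \<bar>a\<bar> * ((1/2) powr (a - 1) + R powr (a - 1))"
  fix y w :: real
  assume w: "0 < w" "w \<le> K" and moderate: "exp (- ln (y\<^sup>2 + 2) / 4) \<le> w"
  define L where "L = ln (y\<^sup>2 + 2)"
  define r where "r = ln (y\<^sup>2 * w\<^sup>2 + 2) / L"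
  define lw where "lw = (if w < 1 then - 2 * ln w else 0)"
  have m: "ln m \<ge> 0" unfolding m_def by simp
  have L: "L > 0" "L \<ge> ln 2" unfolding L_def using ln_sq_plus_two_pos ln_sq_plus_two_ge_ln2 by auto
  have D: "D \<ge> 0" unfolding D_def by simp
  have "r - 1 = (ln (y\<^sup>2 * w\<^sup>2 + 2) - L) / L" unfolding r_def using L by (simp add: field_simps)
  also have "\<dots> \<le> ln m / L"
    using ln_sq_mult_plus_two_le[of w K y] w L unfolding L_def m_def by (intro divide_right_mono) auto
  finally have "r - 1 \<le> ln m / L" .
  moreover have "ln m / L \<le> ln m / ln 2" using m L by (intro divide_left_mono) auto
  ultimately have r_upper: "r - 1 \<le> ln m / L" "r \<le> R" unfolding R_def by auto
  have r_lower: "- lw / L \<le> r - 1 \<and> 1/2 \<le> r"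
  proof (cases "w < 1")
    case True
    have "ln (exp (- L / 4)) \<le> ln w" using moderate w unfolding L_def by (subst ln_le_cancel_iff) auto
    then have "- 1/2 \<le> 2 * ln w / L" using L by (simp add: field_simps)
    moreover have "2 * ln w / L \<le> r - 1"
      using ln_sq_mult_plus_two_ge[of w y] True w L unfolding r_def L_def by (simp add: field_simps)
    moreover have "- lw / L = 2 * ln w / L" unfolding lw_def using True by simp
    ultimately show ?thesis by linarith
  next
    case False
    then have "1 \<le> r" using ln_sq_plus_two_le_mult[of w y] L unfolding r_def L_def by simp
    then show ?thesis unfolding lw_def using False by simp
  qed
  have "lw / L \<ge> 0" "ln m / L \<ge> 0" unfolding lw_def using w m L by auto
  then have "\<bar>r - 1\<bar> \<le> (lw + ln m) / L"
    using r_lower r_upper unfolding abs_le_iff add_divide_distrib by auto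
  moreover have "\<bar>r powr a - 1\<bar> \<le> D * \<bar>r - 1\<bar>"
    using abs_powr_minus_one_le[of "1/2" R r a] r_lower r_upper m unfolding D_def R_def by auto
  ultimately have "\<bar>r powr a - 1\<bar> \<le> D * ((lw + ln m) / L)"
    using D by (meson mult_left_mono order_trans)
  then have "w powr p * \<bar>r powr a - 1\<bar> \<le> w powr p * (D * ((lw + ln m) / L))"
    by (intro mult_left_mono) auto
  also have "\<dots> = D * (w powr p * lw + w powr p * ln m) / L"
    using L by (simp add: field_simps)
  also have "\<dots> \<le> D * (2 / p + K powr p * ln m) / L"
  proof -
    have "w powr p * lw \<le> 2 / p"
      using powr_mult_neg_ln_le[of w p] w assms unfolding lw_def by auto
    moreover have "w powr p * ln m \<le> K powr p * ln m"
      using w assms m by (intro mult_right_mono powr_mono2) auto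
    ultimately show ?thesis using D L by (intro divide_right_mono mult_left_mono) auto
  qed
  finally show "w powr p * \<bar>(ln (y\<^sup>2 * w\<^sup>2 + 2) / ln (y\<^sup>2 + 2)) powr a - 1\<bar>
                  \<le> D * (2 / p + K powr p * ln m) / ln (y\<^sup>2 + 2)"
    unfolding r_def L_def .
qed

lemma log_ratio_error_tiny:
  fixes p a K :: real
  assumes "p > 0"
  shows "\<exists>B. \<forall>y w. 0 < w \<longrightarrow> w \<le> K \<longrightarrow> w < exp (- ln (y\<^sup>2 + 2) / 4) \<longrightarrow>
           w powr p * \<bar>(ln (y\<^sup>2 * w\<^sup>2 + 2) / ln (y\<^sup>2 + 2)) powr a - 1\<bar> \<le> B / ln (y\<^sup>2 + 2)"
proof (intro exI allI impI)
  define R where "R = 1 + ln (max 1 (K\<^sup>2)) / ln 2"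
  define b where "b = \<bar>a\<bar> + 1"
  fix y w :: real
  assume w: "0 < w" "w \<le> K" and tiny: "w < exp (- ln (y\<^sup>2 + 2) / 4)"
  define L where "L = ln (y\<^sup>2 + 2)"
  define r where "r = ln (y\<^sup>2 * w\<^sup>2 + 2) / L"
  define Q where "Q = R * L / ln 2"
  have L: "L > 0" "L \<ge> ln 2" unfolding L_def using ln_sq_plus_two_pos ln_sq_plus_two_ge_ln2 by auto
  have R: "R \<ge> 1" unfolding R_def by simp
  have "1 * ln 2 \<le> R * L" using R L by (intro mult_mono) auto
  then have Q: "Q \<ge> 1" unfolding Q_def by simp
  have "r \<le> (L + ln (max 1 (K\<^sup>2))) / L"
    using ln_sq_mult_plus_two_le[of w K y] w L unfolding r_def L_def by (intro divide_right_mono) auto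
  also have "\<dots> = 1 + ln (max 1 (K\<^sup>2)) / L" using L by (simp add: field_simps)
  also have "\<dots> \<le> R" unfolding R_def using L by (intro add_left_mono divide_left_mono) auto
  also have "R \<le> Q" unfolding Q_def using R L by (simp add: field_simps)
  finally have "r \<le> Q" .
  moreover have "1 / Q \<le> r"
  proof -
    have "1 / Q = ln 2 / (R * L)" unfolding Q_def by simp
    also have "\<dots> \<le> ln 2 / L" using R L by (intro divide_left_mono) auto
    also have "\<dots> \<le> r" unfolding r_def
      using ln_sq_plus_two_ge_ln2[of "y * w"] L by (intro divide_right_mono) (auto simp: power_mult_distrib)
    finally show ?thesis .
  qed
  moreover have "1 \<le> Q powr \<bar>a\<bar>" using Q by (simp add: ge_one_powr_ge_zero)
  ultimately have "\<bar>r powr a - 1\<bar> \<le> 2 * Q powr \<bar>a\<bar>"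
    using powr_le_powr_abs_of_bounds[OF Q, of r a] powr_ge_zero[of r a] unfolding abs_le_iff by linarith
  also have "Q powr \<bar>a\<bar> = (R / ln 2) powr \<bar>a\<bar> * L powr \<bar>a\<bar>"
    unfolding Q_def using R L by (simp add: powr_mult[symmetric] field_simps)
  finally have ratio: "\<bar>r powr a - 1\<bar> \<le> 2 * (R / ln 2) powr \<bar>a\<bar> * L powr \<bar>a\<bar>" by simp
  have "L powr \<bar>a\<bar> * L = L powr b" unfolding b_def using L by (simp add: powr_add)
  also have "\<dots> \<le> (b / (p / 4)) powr b * exp (p / 4 * L)"
    using L assms unfolding b_def by (intro powr_le_exp) auto
  also have "b / (p / 4) = 4 * b / p" by simp
  finally have "exp (- p * L / 4) * (L powr \<bar>a\<bar> * L) \<le> exp (- p * L / 4) * ((4 * b / p) powr b * exp (p / 4 * L))"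
    by (intro mult_left_mono) auto
  also have "\<dots> = (4 * b / p) powr b" by (simp add: exp_add[symmetric] field_simps)
  finally have decay: "exp (- p * L / 4) * L powr \<bar>a\<bar> \<le> (4 * b / p) powr b / L"
    using L by (simp add: field_simps)
  have "w powr p \<le> exp (- L / 4) powr p" using tiny w assms unfolding L_def by (intro powr_mono2) auto
  then have "w powr p \<le> exp (- p * L / 4)" by (simp add: powr_def)
  then have "w powr p * \<bar>r powr a - 1\<bar> \<le> exp (- p * L / 4) * (2 * (R / ln 2) powr \<bar>a\<bar> * L powr \<bar>a\<bar>)"
    using ratio by (intro mult_mono) auto
  also have "\<dots> = 2 * (R / ln 2) powr \<bar>a\<bar> * (exp (- p * L / 4) * L powr \<bar>a\<bar>)" by simp
  also have "\<dots> \<le> 2 * (R / ln 2) powr \<bar>a\<bar> * ((4 * b / p) powr b / L)"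
    using decay by (intro mult_left_mono) auto
  finally show "w powr p * \<bar>(ln (y\<^sup>2 * w\<^sup>2 + 2) / ln (y\<^sup>2 + 2)) powr a - 1\<bar>
                  \<le> 2 * (R / ln 2) powr \<bar>a\<bar> * (4 * b / p) powr b / ln (y\<^sup>2 + 2)"
    unfolding r_def L_def by simp
qed

lemma log_ratio_error:
  fixes p a K :: real
  assumes "p > 0"
  shows "\<exists>B. \<forall>y w. 0 \<le> w \<longrightarrow> w \<le> K \<longrightarrow>
           w powr p * \<bar>(ln (y\<^sup>2 * w\<^sup>2 + 2) / ln (y\<^sup>2 + 2)) powr a - 1\<bar> \<le> B / ln (y\<^sup>2 + 2)"
proof -
  obtain B1 B2 where
    B1: "\<And>y w. 0 < w \<Longrightarrow> w \<le> K \<Longrightarrow> exp (- ln (y\<^sup>2 + 2) / 4) \<le> w \<Longrightarrow>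
           w powr p * \<bar>(ln (y\<^sup>2 * w\<^sup>2 + 2) / ln (y\<^sup>2 + 2)) powr a - 1\<bar> \<le> B1 / ln (y\<^sup>2 + 2)" and
    B2: "\<And>y w. 0 < w \<Longrightarrow> w \<le> K \<Longrightarrow> w < exp (- ln (y\<^sup>2 + 2) / 4) \<Longrightarrow>
           w powr p * \<bar>(ln (y\<^sup>2 * w\<^sup>2 + 2) / ln (y\<^sup>2 + 2)) powr a - 1\<bar> \<le> B2 / ln (y\<^sup>2 + 2)"
    using log_ratio_error_moderate[OF assms, of K a] log_ratio_error_tiny[OF assms, of K a] by blast
  show ?thesis
  proof (intro exI allI impI)
    fix y w :: real assume w: "0 \<le> w" "w \<le> K"
    let ?B = "max (max B1 B2) 0 / ln (y\<^sup>2 + 2)"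
    have bounds: "B1 / ln (y\<^sup>2 + 2) \<le> ?B" "B2 / ln (y\<^sup>2 + 2) \<le> ?B" "0 \<le> ?B"
      using ln_sq_plus_two_pos[of y] by (auto intro: divide_right_mono)
    consider "w = 0" | "0 < w" "exp (- ln (y\<^sup>2 + 2) / 4) \<le> w"
      | "0 < w" "w < exp (- ln (y\<^sup>2 + 2) / 4)"
      using w by linarith
    then show "w powr p * \<bar>(ln (y\<^sup>2 * w\<^sup>2 + 2) / ln (y\<^sup>2 + 2)) powr a - 1\<bar> \<le> ?B"
    proof cases
      case 2
      then show ?thesis using B1[OF 2(1) w(2) 2(2)] bounds by linarith
    next
      case 3
      then show ?thesis using B2[OF 3(1) w(2) 3(2)] bounds by linarith
    qed (use bounds in simp)
  qed
qed

subsection \<open>The tail integral\<close>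

definition tail_density :: "real \<Rightarrow> real \<Rightarrow> real \<Rightarrow> real" where
  "tail_density p a x = 1 / (x powr p * ln (x\<^sup>2 + 2) powr a)"

definition tail :: "real \<Rightarrow> real \<Rightarrow> real \<Rightarrow> real" where
  "tail p a y = integral {y..} (tail_density p a)"

definition tail_approx :: "real \<Rightarrow> real \<Rightarrow> real \<Rightarrow> real" where
  "tail_approx p a y = y powr (1 - p) * ln (y\<^sup>2 + 2) powr (- a) / (p - 1)"

definition tail_correction :: "real \<Rightarrow> real \<Rightarrow> real \<Rightarrow> real" where
  "tail_correction p a x = 2 * a * x\<^sup>2 / ((p - 1) * (x\<^sup>2 + 2) * ln (x\<^sup>2 + 2))"

definition correction_bound :: "real \<Rightarrow> real \<Rightarrow> real \<Rightarrow> real" where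
  "correction_bound p a y = 2 * \<bar>a\<bar> / ((p - 1) * ln (y\<^sup>2 + 2))"

text \<open>Beyond this point the correction is at most 1/2.\<close>
definition correction_threshold :: "real \<Rightarrow> real \<Rightarrow> real" where
  "correction_threshold p a = exp (2 * \<bar>a\<bar> / (p - 1))"

context
  fixes p a :: real
  assumes p_gt_1: "p > 1"
begin

lemma tail_approx_has_derivative:
  assumes "x > 0"
  shows "(tail_approx p a has_real_derivative
           - (tail_density p a x * (1 + tail_correction p a x))) (at x)"
proof -
  define L where "L = ln (x\<^sup>2 + 2)"
  define D where "D = x\<^sup>2 + 2"
  have L: "L > 0" and D: "D > 0"
    unfolding L_def D_def using ln_sq_plus_two_pos sq_plus_two_pos by auto
  have "(tail_approx p a has_real_derivative
     ((1-p) * x powr (1-p-1) * L powr (-a) + x powr (1-p) * ((-a) * L powr (-a-1) * ((2*x)/D)))/(p-1)) (at x)"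
    unfolding tail_approx_def L_def D_def using assms p_gt_1 L[unfolded L_def] sq_plus_two_pos[of x]
    by (auto intro!: derivative_eq_intros simp: power2_eq_square)
  moreover have "((1-p) * x powr (1-p-1) * L powr (-a) + x powr (1-p) * ((-a) * L powr (-a-1) * ((2*x)/D)))/(p-1)
     = - (tail_density p a x * (1 + tail_correction p a x))"
  proof -
    have "x powr (1-p-1) = 1 / x powr p" "x powr (1-p) = x / x powr p"
      using assms by (simp_all add: powr_diff powr_minus_divide)
    moreover have "L powr (-a) = 1 / L powr a" "L powr (-a-1) = 1 / (L powr a * L)"
      using L by (simp_all add: powr_diff powr_minus_divide)
    moreover have "x powr p > 0" "L powr a > 0" using assms L by auto
    \<comment> \<open>with \<open>x powr p\<close> and \<open>L powr a\<close> abstracted, \<open>field_simps\<close> does not unfold \<open>powr\<close>\<close>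
    moreover have "((1-p) * (1/X) * (1/A) + (x/X) * ((-a) * (1/(A*L)) * ((2*x)/D))) / (p-1)
        = - (1/(X*A) * (1 + 2*a*(x*x) / ((p-1)*D*L)))" if "X > 0" "A > 0" for X A :: real
      using that L D p_gt_1 by (simp add: field_simps)
    ultimately show ?thesis
      unfolding tail_density_def tail_correction_def D_def[symmetric]
      by (simp add: power2_eq_square L_def D_def)
  qed
  ultimately show ?thesis by simp
qed

lemma tail_density_pos: "x > 0 \<Longrightarrow> tail_density p a x > 0"
  unfolding tail_density_def using ln_sq_plus_two_pos[of x] by simp

lemma continuous_on_tail_density: "continuous_on {0<..} (tail_density p a)"
proof -
  have "ln (x\<^sup>2 + 2) \<noteq> 0" "x\<^sup>2 + 2 \<noteq> 0" for x :: real
    using ln_sq_plus_two_pos[of x] sq_plus_two_pos[of x] by auto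
  then show ?thesis unfolding tail_density_def
    using ln_sq_plus_two_pos sq_plus_two_pos by (auto intro!: continuous_intros)
qed

lemma continuous_on_tail_correction: "continuous_on {0<..} (tail_correction p a)"
proof -
  have "ln (x\<^sup>2 + 2) \<noteq> 0" "x\<^sup>2 + 2 \<noteq> 0" for x :: real
    using ln_sq_plus_two_pos[of x] sq_plus_two_pos[of x] by auto
  then show ?thesis unfolding tail_correction_def
    using ln_sq_plus_two_pos sq_plus_two_pos p_gt_1 by (auto intro!: continuous_intros)
qed

lemma correction_threshold_ge_1: "correction_threshold p a \<ge> 1"
  using p_gt_1 by (simp add: correction_threshold_def)

lemma correction_threshold_pos: "correction_threshold p a > 0"
  using correction_threshold_ge_1 by linarith

lemma correction_bound_nonneg: "correction_bound p a x \<ge> 0"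
  unfolding correction_bound_def using p_gt_1 ln_sq_plus_two_pos[of x] by auto

lemma correction_bound_antimono: "0 \<le> y \<Longrightarrow> y \<le> x \<Longrightarrow> correction_bound p a x \<le> correction_bound p a y"
  unfolding correction_bound_def using p_gt_1 ln_sq_plus_two_pos[of y] ln_sq_plus_two_mono[of y x]
  by (intro divide_left_mono mult_left_mono) auto

lemma abs_tail_correction_le: "\<bar>tail_correction p a x\<bar> \<le> correction_bound p a x"
proof -
  have "\<bar>tail_correction p a x\<bar> = correction_bound p a x * (x\<^sup>2 / (x\<^sup>2 + 2))"
    unfolding tail_correction_def correction_bound_def
    using ln_sq_plus_two_pos[of x] p_gt_1 sq_plus_two_pos[of x]
    by (simp add: abs_mult abs_divide abs_of_pos)
  also have "\<dots> \<le> correction_bound p a x"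
    using sq_plus_two_pos[of x] correction_bound_nonneg by (intro mult_right_le_one_le) auto
  finally show ?thesis .
qed

lemma correction_bound_le_half:
  assumes "x \<ge> correction_threshold p a"
  shows "correction_bound p a x \<le> 1/2"
proof -
  have x: "x > 0" using assms correction_threshold_pos by linarith
  have "2 * \<bar>a\<bar> / (p - 1) = ln (correction_threshold p a)"
    by (simp add: correction_threshold_def)
  also have "\<dots> \<le> ln x" using assms correction_threshold_pos by simp
  also have "\<dots> = ln (x\<^sup>2) / 2" using x by (simp add: ln_realpow)
  also have "\<dots> \<le> ln (x\<^sup>2 + 2) / 2"
    using x sq_plus_two_pos[of x] by (intro divide_right_mono, subst ln_le_cancel_iff) auto
  finally have "4 * \<bar>a\<bar> \<le> (p - 1) * ln (x\<^sup>2 + 2)" using p_gt_1 by (simp add: field_simps)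
  thus ?thesis unfolding correction_bound_def using ln_sq_plus_two_pos[of x] p_gt_1
    by (simp add: divide_le_eq)
qed

lemma corrected_density_nonneg:
  assumes "x \<ge> correction_threshold p a"
  shows "tail_density p a x * (1 + tail_correction p a x) \<ge> 0"
  using abs_tail_correction_le[of x] correction_bound_le_half[OF assms]
    tail_density_pos[of x] assms correction_threshold_pos by auto

lemma corrected_density_has_integral_interval:
  assumes "0 < y" "y \<le> b"
  shows "((\<lambda>x. tail_density p a x * (1 + tail_correction p a x))
           has_integral (tail_approx p a y - tail_approx p a b)) {y..b}"
proof -
  have "((\<lambda>x. tail_density p a x * (1 + tail_correction p a x)) has_integral
          ((\<lambda>x. - tail_approx p a x) b - (\<lambda>x. - tail_approx p a x) y)) {y..b}"
  proof (rule fundamental_theorem_of_calculus[OF assms(2)])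
    fix x assume "x \<in> {y..b}"
    hence "x > 0" using assms by auto
    from DERIV_minus[OF tail_approx_has_derivative[OF this]]
    show "((\<lambda>x. - tail_approx p a x) has_vector_derivative
            tail_density p a x * (1 + tail_correction p a x)) (at x within {y..b})"
      by (simp add: has_real_derivative_iff_has_vector_derivative[symmetric] has_field_derivative_at_within)
  qed
  thus ?thesis by simp
qed

lemma tail_approx_at_top: "(tail_approx p a \<longlongrightarrow> 0) at_top"
  unfolding tail_approx_def using p_gt_1 by real_asymp

lemma tail_approx_at_right_0: "filterlim (tail_approx p a) at_top (at_right 0)"
  unfolding tail_approx_def using p_gt_1 by real_asymp

lemma corrected_density_has_integral:
  assumes "y \<ge> correction_threshold p a"
  shows "((\<lambda>x. tail_density p a x * (1 + tail_correction p a x)) has_integral tail_approx p a y) {y..}"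
proof (rule has_integral_to_inf)
  have y: "y > 0" using assms correction_threshold_pos by linarith
  have "continuous_on {0<..} (\<lambda>x. tail_density p a x * (1 + tail_correction p a x))"
    by (intro continuous_on_mult continuous_on_add continuous_on_const
          continuous_on_tail_density continuous_on_tail_correction)
  then show "(\<lambda>x. tail_density p a x * (1 + tail_correction p a x)) integrable_on {y..b}" for b
    using y by (intro integrable_continuous_interval) (auto elim!: continuous_on_subset)
  have "((\<lambda>b. tail_approx p a y - tail_approx p a b) \<longlongrightarrow> tail_approx p a y - 0) at_top"
    by (intro tendsto_intros tail_approx_at_top)
  moreover have "eventually (\<lambda>b. integral {y..b} (\<lambda>x. tail_density p a x * (1 + tail_correction p a x))
                                 = tail_approx p a y - tail_approx p a b) at_top"
    using corrected_density_has_integral_interval[OF y] eventually_at_top_linorder by blast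
  ultimately show "((\<lambda>b. integral {y..b} (\<lambda>x. tail_density p a x * (1 + tail_correction p a x)))
                     \<longlongrightarrow> tail_approx p a y) at_top"
    by (simp add: tendsto_cong)
  show "tail_density p a x * (1 + tail_correction p a x) \<ge> 0" if "y \<le> x" for x
    using that assms by (intro corrected_density_nonneg) auto
qed

lemma tail_density_integrable_interval: "0 < y \<Longrightarrow> tail_density p a integrable_on {y..b}"
  by (rule integrable_continuous_interval, rule continuous_on_subset[OF continuous_on_tail_density]) auto

lemma tail_density_integrable_beyond_threshold:
  assumes "y \<ge> correction_threshold p a"
  shows "tail_density p a integrable_on {y..}"
proof (rule measurable_bounded_by_integrable_imp_integrable_real)
  have y: "y > 0" using assms correction_threshold_pos by linarith
  show "tail_density p a \<in> borel_measurable (lebesgue_on {y..})"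
    using y by (intro continuous_imp_measurable_on_sets_lebesgue
                  continuous_on_subset[OF continuous_on_tail_density]) auto
  show "(\<lambda>x. 2 * (tail_density p a x * (1 + tail_correction p a x))) integrable_on {y..}"
    using integrable_on_cmult_left[OF has_integral_integrable[OF corrected_density_has_integral[OF assms]], of 2]
    by simp
  show "{y..} \<in> sets lebesgue" by simp
  fix x assume "x \<in> {y..}"
  hence x: "x \<ge> correction_threshold p a" "x > 0" using assms y by auto
  have "1 + 2 * tail_correction p a x \<ge> 0"
    using abs_tail_correction_le[of x] correction_bound_le_half[OF x(1)] by linarith
  then have "tail_density p a x * (1 + 2 * tail_correction p a x) \<ge> 0"
    using tail_density_pos[OF x(2)] by simp
  moreover have "2 * (tail_density p a x * (1 + tail_correction p a x))
      = tail_density p a x + tail_density p a x * (1 + 2 * tail_correction p a x)"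
    by (simp add: ring_distribs)
  ultimately show "\<bar>tail_density p a x\<bar> \<le> 2 * (tail_density p a x * (1 + tail_correction p a x))"
    using tail_density_pos[OF x(2)] by simp
qed

lemma tail_density_integrable:
  assumes "y > 0"
  shows "tail_density p a integrable_on {y..}"
proof (cases "y \<ge> correction_threshold p a")
  case True
  then show ?thesis by (rule tail_density_integrable_beyond_threshold)
next
  case False
  define X where "X = correction_threshold p a"
  have "(tail_density p a has_integral
          (integral {y..X} (tail_density p a) + integral {X..} (tail_density p a))) ({y..X} \<union> {X..})"
  proof (rule has_integral_Un)
    have "{y..X} \<inter> {X..} = {X}" using False unfolding X_def by auto
    then show "negligible ({y..X} \<inter> {X..})" by simp
  qed (use tail_density_integrable_interval[OF assms] tail_density_integrable_beyond_threshold[of X]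
       X_def in auto)
  moreover have "{y..X} \<union> {X..} = {y..}" using False unfolding X_def by auto
  ultimately show ?thesis by auto
qed

lemma tail_split:
  assumes "0 < y" "y \<le> b"
  shows "tail p a y = integral {y..b} (tail_density p a) + tail p a b"
proof -
  have "(tail_density p a has_integral (integral {y..b} (tail_density p a) + tail p a b)) ({y..b} \<union> {b..})"
    unfolding tail_def
    by (rule has_integral_Un)
       (use tail_density_integrable_interval[OF assms(1)] tail_density_integrable[of b] assms in auto)
  moreover have "{y..b} \<union> {b..} = {y..}" using assms by auto
  ultimately show ?thesis unfolding tail_def by auto
qed

lemma tail_nonneg: "0 < y \<Longrightarrow> tail p a y \<ge> 0"
  unfolding tail_def
  by (rule integral_nonneg[OF tail_density_integrable]) (auto intro!: less_imp_le[OF tail_density_pos])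

lemma integral_tail_density_pos:
  assumes "0 < y" "y < b"
  shows "integral {y..b} (tail_density p a) > 0"
proof -
  have "continuous_on {y..b} (tail_density p a)"
    using assms by (intro continuous_on_subset[OF continuous_on_tail_density]) auto
  then obtain m where m: "m \<in> {y..b}" "\<And>x. x \<in> {y..b} \<Longrightarrow> tail_density p a m \<le> tail_density p a x"
    using continuous_attains_inf[of "{y..b}" "tail_density p a"] assms by auto
  have "(b - y) * tail_density p a m \<le> integral {y..b} (tail_density p a)"
    using has_integral_const_real[of "tail_density p a m" y b] assms
    by (intro has_integral_le[OF _ integrable_integral[OF tail_density_integrable_interval]])
       (auto intro: m(2))
  moreover have "(b - y) * tail_density p a m > 0"
    using assms m(1) tail_density_pos[of m] by simp
  ultimately show ?thesis by linarith
qed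

lemma tail_strict_antimono: "0 < y \<Longrightarrow> y < b \<Longrightarrow> tail p a b < tail p a y"
  using tail_split[of y b] integral_tail_density_pos[of y b] by auto

lemma tail_antimono: "0 < y \<Longrightarrow> y \<le> b \<Longrightarrow> tail p a b \<le> tail p a y"
  using tail_strict_antimono[of y b] by (cases "y = b") auto

lemma tail_pos: "y > 0 \<Longrightarrow> tail p a y > 0"
  using tail_strict_antimono[of y "y + 1"] tail_nonneg[of "y + 1"] by auto

lemma tail_approx_error:
  assumes "y \<ge> correction_threshold p a"
  shows "\<bar>tail_approx p a y - tail p a y\<bar> \<le> correction_bound p a y * tail p a y"
proof -
  let ?\<delta> = "correction_bound p a y"
  have y: "y > 0" using assms correction_threshold_pos by linarith
  have density: "(tail_density p a has_integral tail p a y) {y..}"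
    unfolding tail_def using tail_density_integrable[OF y] by auto
  have "((\<lambda>x. tail_density p a x * (1 + tail_correction p a x) - tail_density p a x)
          has_integral (tail_approx p a y - tail p a y)) {y..}"
    by (rule has_integral_diff[OF corrected_density_has_integral[OF assms] density])
  then have error: "((\<lambda>x. tail_density p a x * tail_correction p a x)
                       has_integral (tail_approx p a y - tail p a y)) {y..}"
    by (simp add: algebra_simps)
  have majorant: "((\<lambda>x. ?\<delta> * tail_density p a x) has_integral (?\<delta> * tail p a y)) {y..}"
    using has_integral_mult_right[OF density] by simp
  have pointwise: "\<bar>tail_density p a x * tail_correction p a x\<bar> \<le> ?\<delta> * tail_density p a x"
    if "x \<in> {y..}" for x
  proof -
    have x: "x > 0" "y \<le> x" using that y by auto
    have "\<bar>tail_correction p a x\<bar> \<le> ?\<delta>"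
      using abs_tail_correction_le[of x] correction_bound_antimono[of y x] x y by linarith
    then show ?thesis using tail_density_pos[OF x(1)] by (simp add: abs_mult mult_left_mono mult.commute)
  qed
  have "tail_approx p a y - tail p a y \<le> ?\<delta> * tail p a y"
    by (rule has_integral_le[OF error majorant]) (use pointwise abs_le_iff in blast)
  moreover have "- (?\<delta> * tail p a y) \<le> tail_approx p a y - tail p a y"
    by (rule has_integral_le[OF has_integral_neg[OF majorant] error]) (use pointwise abs_le_iff in force)
  ultimately show ?thesis by linarith
qed

lemma tail_ge_near_0:
  assumes "\<tau> > 0"
  shows "\<exists>y. 0 < y \<and> y \<le> correction_threshold p a \<and> \<tau> \<le> tail p a y"
proof -
  let ?X = "correction_threshold p a" and ?c = "1 + correction_bound p a 0"
  have c: "?c \<ge> 1" using correction_bound_nonneg[of 0] by linarith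
  have "eventually (\<lambda>y. tail_approx p a ?X + ?c * \<tau> \<le> tail_approx p a y) (at_right 0)"
    using tail_approx_at_right_0 filterlim_at_top by blast
  then obtain b where b: "b > 0" "\<And>y. 0 < y \<Longrightarrow> y < b \<Longrightarrow> tail_approx p a ?X + ?c * \<tau> \<le> tail_approx p a y"
    unfolding eventually_at_right_field by auto
  define y where "y = min b ?X / 2"
  have y: "0 < y" "y < b" "y < ?X" using b correction_threshold_pos unfolding y_def by auto
  have "tail_approx p a y - tail_approx p a ?X \<le> ?c * integral {y..?X} (tail_density p a)"
  proof (rule has_integral_le[OF corrected_density_has_integral_interval
                 has_integral_mult_right[OF integrable_integral[OF tail_density_integrable_interval]]])
    fix x assume "x \<in> {y..?X}"
    then have x: "x > 0" using y by auto
    have "tail_correction p a x \<le> correction_bound p a 0"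
      using abs_tail_correction_le[of x] correction_bound_antimono[of 0 x] x by auto
    then show "tail_density p a x * (1 + tail_correction p a x) \<le> ?c * tail_density p a x"
      using tail_density_pos[OF x] by (simp add: mult.commute mult_left_mono)
  qed (use y in auto)
  also have "\<dots> \<le> ?c * tail p a y"
    using tail_split[of y ?X] tail_nonneg[OF correction_threshold_pos] y c by auto
  finally have "?c * \<tau> \<le> ?c * tail p a y" using b(2)[OF y(1,2)] by linarith
  then show ?thesis using y c by (intro exI[of _ y]) auto
qed

lemma tail_le_near_infinity:
  assumes "\<tau> > 0"
  shows "\<exists>y. correction_threshold p a \<le> y \<and> tail p a y \<le> \<tau>"
proof -
  obtain N where N: "\<And>y. y \<ge> N \<Longrightarrow> tail_approx p a y < \<tau>/2"
    using order_tendstoD(2)[OF tail_approx_at_top, of "\<tau>/2"] assms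
    unfolding eventually_at_top_linorder by auto
  define y where "y = max N (correction_threshold p a)"
  have y: "y \<ge> correction_threshold p a" "tail_approx p a y < \<tau>/2"
    using N unfolding y_def by auto
  have "tail p a y - tail_approx p a y \<le> correction_bound p a y * tail p a y"
    using tail_approx_error[OF y(1)] by linarith
  also have "\<dots> \<le> 1/2 * tail p a y"
    using correction_bound_le_half[OF y(1)] tail_nonneg[of y] y(1) correction_threshold_pos
    by (intro mult_right_mono) auto
  finally show ?thesis using y by (intro exI[of _ y]) auto
qed

lemma tail_attains:
  assumes "\<tau> > 0"
  shows "\<exists>y>0. tail p a y = \<tau>"
proof -
  obtain lo where lo: "0 < lo" "lo \<le> correction_threshold p a" "\<tau> \<le> tail p a lo"
    using tail_ge_near_0[OF assms] by auto
  obtain hi where hi: "correction_threshold p a \<le> hi" "tail p a hi \<le> \<tau>"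
    using tail_le_near_infinity[OF assms] by auto
  have le: "lo \<le> hi" using lo hi by linarith
  have "\<exists>x. lo \<le> x \<and> x \<le> hi \<and> integral {lo..x} (tail_density p a) = tail p a lo - \<tau>"
  proof (rule IVT'[OF _ _ le indefinite_integral_continuous_1[OF tail_density_integrable_interval[OF lo(1)]]])
    show "integral {lo..lo} (tail_density p a) \<le> tail p a lo - \<tau>" using lo by simp
    show "tail p a lo - \<tau> \<le> integral {lo..hi} (tail_density p a)"
      using tail_split[OF lo(1) le] hi by linarith
  qed
  then obtain x where x: "lo \<le> x" "integral {lo..x} (tail_density p a) = tail p a lo - \<tau>"
    by blast
  then have "tail p a x = \<tau>" using tail_split[OF lo(1) x(1)] by linarith
  then show ?thesis using x lo by (intro exI[of _ x]) auto
qed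

lemma Psi_solves_tail:
  assumes "\<tau> > 0"
  shows "Psi p a \<tau> > 0 \<and> tail p a (Psi p a \<tau>) = \<tau>"
proof -
  have integrand: "(\<lambda>x. 1 / (x powr p * ln (x\<^sup>2 + 2) powr a)) = tail_density p a"
    by (simp add: tail_density_def fun_eq_iff)
  let ?P = "\<lambda>y. y > 0 \<and> (tail_density p a has_integral \<tau>) {y..}"
  have iff: "?P y \<longleftrightarrow> y > 0 \<and> tail p a y = \<tau>" for y
    unfolding tail_def using tail_density_integrable[of y] has_integral_iff by blast
  have unique: "z = y" if "z > 0" "tail p a z = \<tau>" "y > 0" "tail p a y = \<tau>" for y z
    using tail_strict_antimono[of z y] tail_strict_antimono[of y z] that by (cases "z < y"; cases "y < z") auto
  have "\<exists>!y. ?P y" unfolding iff using tail_attains[OF assms] unique by blast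
  from theI'[OF this] show ?thesis unfolding Psi_def integrand iff .
qed

lemma tail_approx_pos: "y > 0 \<Longrightarrow> tail_approx p a y > 0"
  unfolding tail_approx_def using p_gt_1 ln_sq_plus_two_pos[of y] by simp

lemma tail_approx_mult_weight:
  assumes "y > 0"
  shows "tail_approx p a y * (y powr (p - 1) * ln (y\<^sup>2 + 2) powr a) = 1 / (p - 1)"
proof -
  have "tail_approx p a y * (y powr (p - 1) * ln (y\<^sup>2 + 2) powr a)
     = (y powr (1 - p) * y powr (p - 1)) * (ln (y\<^sup>2 + 2) powr (- a) * ln (y\<^sup>2 + 2) powr a) / (p - 1)"
    unfolding tail_approx_def by (simp add: field_simps)
  also have "\<dots> = 1 / (p - 1)"
    using assms ln_sq_plus_two_pos[of y] by (simp add: powr_add[symmetric])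
  finally show ?thesis .
qed

lemma weighted_tail_error_beyond_threshold:
  assumes y: "y \<ge> correction_threshold p a"
  shows "\<bar>tail p a y * (y powr (p - 1) * ln (y\<^sup>2 + 2) powr a) - 1 / (p - 1)\<bar>
           \<le> 4 * \<bar>a\<bar> / (p - 1)\<^sup>2 / ln (y\<^sup>2 + 2)"
proof -
  define k where "k = y powr (p - 1) * ln (y\<^sup>2 + 2) powr a"
  let ?G = "tail p a y" and ?\<Phi> = "tail_approx p a y" and ?\<delta> = "correction_bound p a y"
  have y0: "y > 0" using y correction_threshold_pos by linarith
  have k: "k > 0" unfolding k_def using y0 ln_sq_plus_two_pos[of y] by simp
  have \<Phi>k: "?\<Phi> * k = 1 / (p - 1)" unfolding k_def by (rule tail_approx_mult_weight[OF y0])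
  have err: "\<bar>?\<Phi> - ?G\<bar> \<le> ?\<delta> * ?G" by (rule tail_approx_error[OF y])
  have "?\<delta> * ?G \<le> 1/2 * ?G"
    using correction_bound_le_half[OF y] tail_pos[OF y0] by (intro mult_right_mono) auto
  then have "?G * k \<le> 2 * (?\<Phi> * k)" using err k by (simp add: abs_le_iff)
  then have Gk: "?G * k \<le> 2 / (p - 1)" using \<Phi>k by simp
  have "?G * k - 1 / (p - 1) = k * (?G - ?\<Phi>)" using \<Phi>k by (simp add: algebra_simps)
  then have "\<bar>?G * k - 1 / (p - 1)\<bar> = k * \<bar>?\<Phi> - ?G\<bar>"
    using k by (simp add: abs_mult abs_minus_commute)
  also have "\<dots> \<le> ?\<delta> * (?G * k)" using err k by (simp add: mult_left_mono mult.commute mult.left_commute)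
  also have "\<dots> \<le> ?\<delta> * (2 / (p - 1))" using Gk correction_bound_nonneg by (rule mult_left_mono)
  also have "\<dots> = 4 * \<bar>a\<bar> / (p - 1)\<^sup>2 / ln (y\<^sup>2 + 2)"
    unfolding correction_bound_def using p_gt_1 by (simp add: field_simps power2_eq_square)
  finally show ?thesis unfolding k_def .
qed

lemma weighted_tail_bounded_below_threshold:
  assumes "0 < y" "y \<le> correction_threshold p a" "tail p a y \<le> 1"
  shows "\<bar>tail p a y * (y powr (p - 1) * ln (y\<^sup>2 + 2) powr a) - 1 / (p - 1)\<bar>
           \<le> correction_threshold p a powr (p - 1)
               * max (ln 2 powr a) (ln ((correction_threshold p a)\<^sup>2 + 2) powr a) + 1 / (p - 1)"
proof -
  define k where "k = y powr (p - 1) * ln (y\<^sup>2 + 2) powr a"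
  have "y powr (p - 1) \<le> correction_threshold p a powr (p - 1)"
    using assms p_gt_1 by (intro powr_mono2) auto
  moreover have "ln (y\<^sup>2 + 2) powr a \<le> max (ln 2 powr a) (ln ((correction_threshold p a)\<^sup>2 + 2) powr a)"
    using assms by (intro powr_le_max_endpoints ln_sq_plus_two_ge_ln2 ln_sq_plus_two_mono) auto
  ultimately have "k \<le> correction_threshold p a powr (p - 1)
                        * max (ln 2 powr a) (ln ((correction_threshold p a)\<^sup>2 + 2) powr a)"
    unfolding k_def by (intro mult_mono) auto
  moreover have "0 \<le> tail p a y * k" "tail p a y * k \<le> k"
    using assms tail_pos[of y] unfolding k_def by (auto intro: mult_left_le_one_le)
  moreover have "0 < 1 / (p - 1)" using p_gt_1 by simp
  ultimately show ?thesis unfolding k_def[symmetric] abs_le_iff by linarith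
qed

lemma weighted_tail_error:
  "\<exists>B. \<forall>y>0. tail p a y \<le> 1 \<longrightarrow>
     \<bar>tail p a y * (y powr (p - 1) * ln (y\<^sup>2 + 2) powr a) - 1 / (p - 1)\<bar> \<le> B / ln (y\<^sup>2 + 2)"
  by (rule ex_le_over_ln_sq_plus_two[OF correction_threshold_pos
        weighted_tail_error_beyond_threshold weighted_tail_bounded_below_threshold])

lemma neg_ln_tail_le_beyond_threshold:
  assumes y: "y \<ge> correction_threshold p a"
  shows "- ln (tail p a y) \<le> (1 + 3 * (p - 1) / 2 + \<bar>a\<bar>) * ln (y\<^sup>2 + 2)"
proof -
  define L where "L = ln (y\<^sup>2 + 2)"
  let ?\<Phi> = "tail_approx p a y"
  have y1: "y \<ge> 1" using y correction_threshold_ge_1 by linarith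
  then have y0: "y > 0" by linarith
  have \<Phi>: "?\<Phi> > 0" by (rule tail_approx_pos[OF y0])
  have L1: "L \<ge> 1"
  proof -
    have "1 \<le> ln (3::real)" using exp_le ln_le_cancel_iff[of "exp 1" 3] by simp
    also have "ln 3 \<le> L" unfolding L_def using ln_sq_plus_two_mono[of 1 y] y1 by simp
    finally show ?thesis .
  qed
  have "correction_bound p a y * tail p a y \<le> 1/2 * tail p a y"
    using correction_bound_le_half[OF y] tail_pos[OF y0] by (intro mult_right_mono) auto
  then have "2/3 * ?\<Phi> \<le> tail p a y"
    using tail_approx_error[OF y] unfolding abs_le_iff by linarith
  then have "- ln (tail p a y) \<le> - ln (2/3 * ?\<Phi>)" using \<Phi> by simp
  also have "- ln (2/3 * ?\<Phi>) = ln (3/2) + (p - 1) * ln y + a * ln L + ln (p - 1)"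
  proof -
    have "?\<Phi> = y powr (1 - p) * L powr (- a) / (p - 1)" unfolding tail_approx_def L_def ..
    moreover have "y powr (1 - p) > 0" "L powr (- a) > 0" using y0 L1 by auto
    ultimately have "ln ?\<Phi> = (1 - p) * ln y + (- a) * ln L - ln (p - 1)"
      using y0 L1 p_gt_1 by (simp add: ln_div ln_mult ln_powr)
    moreover have "ln (2/3 * ?\<Phi>) = ln (2/3) + ln ?\<Phi>" using \<Phi> by (intro ln_mult_pos) auto
    ultimately show ?thesis by (simp add: ln_div algebra_simps)
  qed
  also have "\<dots> \<le> L + (p - 1) / 2 * L + \<bar>a\<bar> * L + (p - 1) * L"
  proof -
    have "ln (3/2::real) \<le> L" using ln_le_minus_one[of "3/2::real"] L1 by simp
    moreover have "(p - 1) * ln y \<le> (p - 1) / 2 * L"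
    proof -
      have "2 * ln y = ln (y\<^sup>2)" using y0 by (simp add: ln_realpow)
      also have "\<dots> \<le> L" unfolding L_def using y0 sq_plus_two_pos[of y] by (subst ln_le_cancel_iff) auto
      finally have "(p - 1) * (2 * ln y) \<le> (p - 1) * L" using p_gt_1 by (intro mult_left_mono) auto
      then show ?thesis by simp
    qed
    moreover have "a * ln L \<le> \<bar>a\<bar> * L"
      using L1 ln_le_minus_one[of L] by (intro order_trans[OF mult_right_mono mult_left_mono]) auto
    moreover have "ln (p - 1) \<le> (p - 1) * L"
    proof -
      have "ln (p - 1) \<le> (p - 1) * 1" using ln_le_minus_one[of "p - 1"] p_gt_1 by simp
      also have "\<dots> \<le> (p - 1) * L" using p_gt_1 L1 by (intro mult_left_mono) auto
      finally show ?thesis .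
    qed
    ultimately show ?thesis by linarith
  qed
  also have "\<dots> = (1 + 3 * (p - 1) / 2 + \<bar>a\<bar>) * L" by (simp add: field_simps)
  finally show ?thesis unfolding L_def .
qed

lemma neg_ln_tail_le:
  "\<exists>A>0. \<forall>y>0. - ln (tail p a y) \<le> A * ln (y\<^sup>2 + 2)"
proof (intro exI conjI allI impI)
  let ?X = "correction_threshold p a"
  let ?c = "1 + 3 * (p - 1) / 2 + \<bar>a\<bar>" and ?d = "\<bar>ln (tail p a ?X)\<bar> / ln 2"
  have "0 \<le> 3 * (p - 1) / 2" "0 \<le> \<bar>a\<bar>" using p_gt_1 by simp_all
  then have c: "?c > 0" "?d \<ge> 0" by (linarith, simp)
  then show "?c + ?d > 0" by linarith
  fix y :: real assume y: "y > 0"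
  have L: "ln (y\<^sup>2 + 2) > 0" by (rule ln_sq_plus_two_pos)
  show "- ln (tail p a y) \<le> (?c + ?d) * ln (y\<^sup>2 + 2)"
  proof (cases "y \<ge> ?X")
    case True
    have "?c * ln (y\<^sup>2 + 2) \<le> (?c + ?d) * ln (y\<^sup>2 + 2)"
      using c L by (intro mult_right_mono) auto
    then show ?thesis using neg_ln_tail_le_beyond_threshold[OF True] by linarith
  next
    case False
    have "ln (tail p a ?X) \<le> ln (tail p a y)"
      using tail_antimono[OF y, of ?X] False tail_pos[OF correction_threshold_pos] by simp
    then have "- ln (tail p a y) \<le> \<bar>ln (tail p a ?X)\<bar>" by linarith
    also have "\<dots> \<le> ?d * ln (y\<^sup>2 + 2)"
      using mult_left_mono[OF ln_sq_plus_two_ge_ln2[of y], of "\<bar>ln (tail p a ?X)\<bar>"]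
      by (simp add: field_simps)
    also have "\<dots> \<le> (?c + ?d) * ln (y\<^sup>2 + 2)"
      using c L by (intro mult_right_mono) auto
    finally show ?thesis .
  qed
qed

subsection \<open>Rates in s\<close>

lemma psi1_solves_tail: "psi1 p a s > 0 \<and> tail p a (psi1 p a s) = exp (- s)"
  unfolding psi1_def by (rule Psi_solves_tail) simp

lemma s_le_ln_psi1: "\<exists>A>0. \<forall>s. s \<le> A * ln ((psi1 p a s)\<^sup>2 + 2)"
proof -
  obtain A where A: "A > 0" "\<And>y. y > 0 \<Longrightarrow> - ln (tail p a y) \<le> A * ln (y\<^sup>2 + 2)"
    using neg_ln_tail_le by blast
  have "s \<le> A * ln ((psi1 p a s)\<^sup>2 + 2)" for s
    using A(2)[of "psi1 p a s"] psi1_solves_tail[of s] by simp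
  then show ?thesis using A(1) by blast
qed

lemma hfun_rate: "\<exists>B\<ge>0. \<forall>s\<ge>1. \<bar>hfun p a s - 1 / (p - 1)\<bar> \<le> B / s"
proof -
  obtain B where B: "\<And>y. y > 0 \<Longrightarrow> tail p a y \<le> 1 \<Longrightarrow>
      \<bar>tail p a y * (y powr (p - 1) * ln (y\<^sup>2 + 2) powr a) - 1 / (p - 1)\<bar> \<le> B / ln (y\<^sup>2 + 2)"
    using weighted_tail_error by blast
  obtain A where A: "A > 0" "\<And>s. s \<le> A * ln ((psi1 p a s)\<^sup>2 + 2)"
    using s_le_ln_psi1 by blast
  have "\<bar>hfun p a s - 1 / (p - 1)\<bar> \<le> max B 0 * A / s" if "s \<ge> 1" for s
  proof (rule le_div_of_le_div_ln[OF _ ln_sq_plus_two_pos _ A(2)])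
    show "\<bar>hfun p a s - 1 / (p - 1)\<bar> \<le> B / ln ((psi1 p a s)\<^sup>2 + 2)"
      using B[of "psi1 p a s"] psi1_solves_tail[of s] that unfolding hfun_def by (simp add: mult.assoc)
  qed (use that in simp)
  then show ?thesis using A(1) by (intro exI[of _ "max B 0 * A"]) auto
qed

lemma log_ratio_rate:
  "\<exists>D\<ge>0. \<forall>s\<ge>1. \<forall>w. 0 \<le> w \<longrightarrow> w \<le> K \<longrightarrow>
     w powr p * \<bar>(ln ((psi1 p a s)\<^sup>2 * w\<^sup>2 + 2) / ln ((psi1 p a s)\<^sup>2 + 2)) powr a - 1\<bar> \<le> D / s"
proof -
  obtain B where B: "\<And>y w. 0 \<le> w \<Longrightarrow> w \<le> K \<Longrightarrow>
      w powr p * \<bar>(ln (y\<^sup>2 * w\<^sup>2 + 2) / ln (y\<^sup>2 + 2)) powr a - 1\<bar> \<le> B / ln (y\<^sup>2 + 2)"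
    using log_ratio_error[of p K a] p_gt_1 by auto
  obtain A where A: "A > 0" "\<And>s. s \<le> A * ln ((psi1 p a s)\<^sup>2 + 2)"
    using s_le_ln_psi1 by blast
  show ?thesis
    using A(1) le_div_of_le_div_ln[OF B ln_sq_plus_two_pos _ A(2)]
    by (intro exI[of _ "max B 0 * A"]) auto
qed

end

theorem lemmaA7:
  fixes p a K1 :: real
  assumes "p > 1" and "K1 > 0"
  shows "\<exists>C > 0. \<forall>z s. \<bar>z\<bar> \<le> K1 \<longrightarrow> s \<ge> 1 \<longrightarrow>
     \<bar>hfun p a s * (\<bar>z\<bar> powr (p - 1) * z)
        * ((ln ((psi1 p a s)\<^sup>2 * z\<^sup>2 + 2)) powr a / (ln ((psi1 p a s)\<^sup>2 + 2)) powr a)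
      - \<bar>z\<bar> powr (p - 1) * z / (p - 1)\<bar> \<le> C / s"
proof -
  obtain B where B: "B \<ge> 0" "\<And>s. s \<ge> 1 \<Longrightarrow> \<bar>hfun p a s - 1 / (p - 1)\<bar> \<le> B / s"
    using hfun_rate[OF assms(1), where a = a] by blast
  obtain D where D: "D \<ge> 0" "\<And>s w. s \<ge> 1 \<Longrightarrow> 0 \<le> w \<Longrightarrow> w \<le> K1 \<Longrightarrow>
      w powr p * \<bar>(ln ((psi1 p a s)\<^sup>2 * w\<^sup>2 + 2) / ln ((psi1 p a s)\<^sup>2 + 2)) powr a - 1\<bar> \<le> D / s"
    using log_ratio_rate[OF assms(1), where K = K1 and a = a] by blast
  define C where "C = (1 / (p - 1) + B) * D + K1 powr p * B + 1"
  have "0 \<le> (1 / (p - 1) + B) * D" "0 \<le> K1 powr p * B" using assms B(1) D(1) by simp_all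
  then have "C > 0" unfolding C_def by linarith
  moreover have "\<bar>hfun p a s * (\<bar>z\<bar> powr (p - 1) * z)
        * ((ln ((psi1 p a s)\<^sup>2 * z\<^sup>2 + 2)) powr a / (ln ((psi1 p a s)\<^sup>2 + 2)) powr a)
      - \<bar>z\<bar> powr (p - 1) * z / (p - 1)\<bar> \<le> C / s" if z: "\<bar>z\<bar> \<le> K1" and s: "s \<ge> 1" for z s
  proof -
    let ?V = "\<bar>z\<bar> powr (p - 1) * z"
    let ?\<rho> = "(ln ((psi1 p a s)\<^sup>2 * \<bar>z\<bar>\<^sup>2 + 2) / ln ((psi1 p a s)\<^sup>2 + 2)) powr a"
    have ratio: "ln ((psi1 p a s)\<^sup>2 * z\<^sup>2 + 2) powr a / ln ((psi1 p a s)\<^sup>2 + 2) powr a = ?\<rho>"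
      using ln_sq_plus_two_pos[of "psi1 p a s * z"] ln_sq_plus_two_pos[of "psi1 p a s"]
      by (simp add: powr_divide power_mult_distrib)
    have V: "\<bar>?V\<bar> = \<bar>z\<bar> powr p" by (rule abs_abs_powr_mult_self)
    have "\<bar>z\<bar> powr p \<le> K1 powr p" using z assms by (intro powr_mono2) auto
    then have "\<bar>hfun p a s * ?V * ?\<rho> - ?V * (1 / (p - 1))\<bar>
        \<le> ((1 / (p - 1) + B) * D + K1 powr p * B) / s"
      using B D(2)[OF s, of "\<bar>z\<bar>"] s z assms(1) unfolding V[symmetric]
      by (intro abs_mult_sub_le_div) auto
    also have "\<dots> \<le> C / s" unfolding C_def using s by (intro divide_right_mono) auto
    finally show ?thesis unfolding ratio by simp
  qed
  ultimately show ?thesis by blast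
qed

end
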